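(* There exist no binary orthogonal arrays of parameters $(n,M,\tau)=(10,112,4)$ or $(11,112,4)$, i.e. of length $10$ or $11$, cardinality $112=7\cdot 2^4$ and strength $4$.
   Context: A binary orthogonal array of parameters $(n,M,\tau)$ is the multiset of rows of an $M\times n$ binary matrix such that every $M\times\tau$ submatrix contains each ordered $\tau$-tuple of $\{0,1\}^\tau$ exactly $M/2^\tau$ times as rows. *)

theory Defs
  imports Main "HOL-Library.Multiset"
begin

text \<open>A binary orthogonal array with parameters (n, M, tau): a multiset A of
  binary rows (bool lists of length n) of size M such that for every choice of
  tau distinct columns S and every pattern v on S, the number of rows agreeing
  with v on S equals M / 2^tau (stated multiplicatively to avoid division).\<close>
definition binary_OA :: "nat \<Rightarrow> nat \<Rightarrow> nat \<Rightarrow> bool list multiset \<Rightarrow> bool" where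
  "binary_OA n M \<tau> A \<longleftrightarrow>
     size A = M \<and>
     (\<forall>x \<in># A. length x = n) \<and>
     (\<forall>S v. S \<subseteq> {0..<n} \<longrightarrow> card S = \<tau> \<longrightarrow>
        size (filter_mset (\<lambda>x. \<forall>j\<in>S. x ! j = v j) A) * 2 ^ \<tau> = M)"

end

theory Submission
  imports Defs
begin

text \<open>Let w(T) be the Walsh coefficient of the rows at the column set T, i.e. the sum over all
  rows x of (-1)^(number of ones of x in T), for T among the first nine columns. Delsarte's
  inequality for the first Krawtchouk polynomial gives \<Sum>T. (9 - 2|T|) w(T)^2 \<ge> 0. Expanding
  (-1)^b = 1 - 2b writes w(T) in terms of the numbers of rows that are 1 on the subsets R \<subseteq> T,
  and strength 4 fixes these numbers to 112 / 2^|R| for |R| \<le> 4. Hence w({}) = 112,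
  w(T) = 0 for 1 \<le> |T| \<le> 4, and w(T) = 16 (mod 32) for 5 \<le> |T| \<le> 7, so the sum is at most
  9 * 112^2 - 256 * (C(9,5) + 3 C(9,6) + 5 C(9,7)) < 0.\<close>

lemma sum_Pow_comp_card:
  assumes "finite S"
  shows "(\<Sum>R\<in>Pow S. f (card R)) = (\<Sum>k\<le>card S. of_nat (card S choose k) * f k)"
proof -
  have "(\<Sum>R\<in>Pow S. f (card R)) = (\<Sum>k\<le>card S. \<Sum>R\<in>{R \<in> Pow S. card R = k}. f (card R))"
    by (rule sum.group[symmetric]) (auto simp: assms card_mono)
  also have "\<dots> = (\<Sum>k\<le>card S. of_nat (card S choose k) * f k)"
    by (intro sum.cong refl) (simp add: Pow_def n_subsets[OF assms])
  finally show ?thesis .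
qed

lemma sum_sum_mset_swap:
  "(\<Sum>i\<in>I. \<Sum>x\<in>#A. g i x) = (\<Sum>x\<in>#A. \<Sum>i\<in>I. g i x)"
  by (induction A) (simp_all add: sum.distrib)

lemma sum_mset_nonneg:
  fixes f :: "'a \<Rightarrow> 'b::ordered_comm_monoid_add"
  shows "(\<And>x. x \<in># A \<Longrightarrow> 0 \<le> f x) \<Longrightarrow> 0 \<le> (\<Sum>x\<in>#A. f x)"
  using sum_mset_mono[of A "\<lambda>_. 0" f] by simp

lemma linear_weight_prod_eq_sum_flips:
  fixes e :: "'a \<Rightarrow> 'b::comm_ring_1"
  assumes "finite I" and "T \<subseteq> I"
  shows "(of_nat (card I) - 2 * of_nat (card T)) * prod e T = (\<Sum>a\<in>I. prod (e(a := - e a)) T)"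
proof -
  have "finite T" using assms finite_subset by blast
  have "prod (e(a := - e a)) T = (if a \<in> T then -1 else 1) * prod e T" for a
  proof -
    have "prod (e(a := - e a)) T = (\<Prod>j\<in>T. (if j = a then -1 else 1) * e j)"
      by (intro prod.cong) auto
    then show ?thesis using \<open>finite T\<close> by (simp add: prod.distrib)
  qed
  moreover have "(\<Sum>a\<in>I. if a \<in> T then -1 else 1) = of_nat (card I) - 2 * (of_nat (card T) :: 'b)"
  proof -
    have "card (I - T) = card I - card T" and "card T \<le> card I" and "I \<inter> T = T"
      using assms \<open>finite T\<close> by (auto simp: card_Diff_subset card_mono)
    then show ?thesis
      using \<open>finite I\<close> by (simp add: sum.If_cases Diff_eq[symmetric] of_nat_diff)
  qed
  ultimately show ?thesis by (simp only: sum_distrib_right[symmetric])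
qed

lemma sum_Pow_linear_weight_prod_nonneg:
  fixes e :: "'a \<Rightarrow> 'b::linordered_idom"
  assumes "finite I" and "\<And>j. j \<in> I \<Longrightarrow> \<bar>e j\<bar> \<le> 1"
  shows "0 \<le> (\<Sum>T\<in>Pow I. (of_nat (card I) - 2 * of_nat (card T)) * prod e T)"
proof -
  have "(\<Sum>T\<in>Pow I. (of_nat (card I) - 2 * of_nat (card T)) * prod e T)
      = (\<Sum>T\<in>Pow I. \<Sum>a\<in>I. prod (e(a := - e a)) T)"
    using linear_weight_prod_eq_sum_flips[OF \<open>finite I\<close>] by (intro sum.cong) auto
  also have "\<dots> = (\<Sum>a\<in>I. \<Sum>T\<in>Pow I. prod (e(a := - e a)) T)"
    by (rule sum.swap)
  also have "\<dots> = (\<Sum>a\<in>I. \<Prod>j\<in>I. (e(a := - e a)) j + 1)"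
    by (simp only: prod_add[OF \<open>finite I\<close>] prod.neutral_const mult_1_right)
  also have "0 \<le> \<dots>"
    using assms(2) by (intro sum_nonneg prod_nonneg) (fastforce simp: abs_le_iff)
  finally show ?thesis .
qed

definition sign_at :: "bool list \<Rightarrow> nat \<Rightarrow> int" where
  "sign_at x j = (if x ! j then -1 else 1)"

definition walsh_coeff :: "bool list multiset \<Rightarrow> nat set \<Rightarrow> int" where
  "walsh_coeff A T = (\<Sum>x\<in>#A. \<Prod>j\<in>T. sign_at x j)"

definition ones_count :: "bool list multiset \<Rightarrow> nat set \<Rightarrow> nat" where
  "ones_count A R = size (filter_mset (\<lambda>x. \<forall>j\<in>R. x ! j) A)"

lemma prod_sign_at_expansion:
  assumes "finite S"
  shows "(\<Prod>j\<in>S. sign_at x j) = (\<Sum>R\<in>Pow S. if \<forall>j\<in>R. x ! j then (-2) ^ card R else 0)"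
proof -
  have "(\<Prod>j\<in>S. sign_at x j) = (\<Prod>j\<in>S. (if x ! j then -2 else 0) + 1)"
    by (intro prod.cong) (auto simp: sign_at_def)
  also have "\<dots> = (\<Sum>R\<in>Pow S. \<Prod>j\<in>R. if x ! j then -2 else 0)"
    by (simp add: prod_add[OF assms])
  also have "\<dots> = (\<Sum>R\<in>Pow S. if \<forall>j\<in>R. x ! j then (-2) ^ card R else 0)"
  proof (intro sum.cong refl)
    fix R assume "R \<in> Pow S"
    then have "finite R" using assms finite_subset by auto
    then show "(\<Prod>j\<in>R. if x ! j then -2 else 0) = (if \<forall>j\<in>R. x ! j then (-2::int) ^ card R else 0)"
      by auto
  qed
  finally show ?thesis .
qed

lemma walsh_coeff_eq_sum_ones_count:
  assumes "finite S"
  shows "walsh_coeff A S = (\<Sum>R\<in>Pow S. (-2) ^ card R * int (ones_count A R))"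
proof (induction A)
  case empty
  then show ?case by (simp add: walsh_coeff_def ones_count_def)
next
  case (add x A)
  have "walsh_coeff (add_mset x A) S = (\<Prod>j\<in>S. sign_at x j) + walsh_coeff A S"
    by (simp add: walsh_coeff_def)
  also have "\<dots> = (\<Sum>R\<in>Pow S. (if \<forall>j\<in>R. x ! j then (-2) ^ card R else 0)
                                   + (-2) ^ card R * int (ones_count A R))"
    by (simp add: add prod_sign_at_expansion[OF assms] sum.distrib)
  also have "\<dots> = (\<Sum>R\<in>Pow S. (-2) ^ card R * int (ones_count (add_mset x A) R))"
    by (intro sum.cong refl) (simp add: ones_count_def algebra_simps)
  finally show ?case .
qed

lemma walsh_weighted_sq_sum_nonneg:
  assumes "finite I"
  shows "0 \<le> (\<Sum>T\<in>Pow I. (int (card I) - 2 * int (card T)) * walsh_coeff A T ^ 2)"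
proof -
  have "walsh_coeff A T ^ 2 = (\<Sum>x\<in>#A. \<Sum>y\<in>#A. \<Prod>j\<in>T. sign_at x j * sign_at y j)" for T
    by (simp add: walsh_coeff_def power2_eq_square sum_mset_distrib_left
        sum_mset_distrib_right prod.distrib mult.commute)
  then have "(\<Sum>T\<in>Pow I. (int (card I) - 2 * int (card T)) * walsh_coeff A T ^ 2)
      = (\<Sum>x\<in>#A. \<Sum>y\<in>#A. \<Sum>T\<in>Pow I. (int (card I) - 2 * int (card T))
                                     * (\<Prod>j\<in>T. sign_at x j * sign_at y j))"
    by (simp add: sum_mset_distrib_left sum_sum_mset_swap)
  also have "0 \<le> \<dots>"
  proof -
    have "0 \<le> (\<Sum>T\<in>Pow I. (int (card I) - 2 * int (card T))
                                 * (\<Prod>j\<in>T. sign_at x j * sign_at y j))" for x y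
      using assms by (intro sum_Pow_linear_weight_prod_nonneg) (simp_all add: sign_at_def)
    then show ?thesis by (intro sum_mset_nonneg)
  qed
  finally show ?thesis .
qed

lemma binary_OA_lower_strength:
  assumes oa: "binary_OA n M \<tau> A" and "\<tau> \<le> n"
    and "S \<subseteq> {0..<n}" and "card S \<le> \<tau>"
  shows "size (filter_mset (\<lambda>x. \<forall>j\<in>S. x ! j = v j) A) * 2 ^ card S = M"
  using assms(3-)
proof (induction "\<tau> - card S" arbitrary: S v)
  case 0
  then show ?case using oa by (simp add: binary_OA_def)
next
  case Suc
  let ?P = "\<lambda>x. \<forall>j\<in>S. x ! j = v j"
  have "finite S" using Suc.prems finite_subset by blast
  have "card S < card {0..<n}" using Suc.hyps(2) \<open>\<tau> \<le> n\<close> by simp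
  then have "\<not> {0..<n} \<subseteq> S"
    using card_mono[OF \<open>finite S\<close>, of "{0..<n}"] by linarith
  then obtain a where a: "a \<in> {0..<n}" "a \<notin> S" by blast
  have card_insert: "card (insert a S) = Suc (card S)"
    using \<open>finite S\<close> a by simp
  have extend: "size (filter_mset (\<lambda>x. ?P x \<and> x ! a = b) A) * 2 ^ Suc (card S) = M" for b
  proof -
    have "size (filter_mset (\<lambda>x. \<forall>j\<in>insert a S. x ! j = (v(a := b)) j) A)
          * 2 ^ card (insert a S) = M"
      using Suc a card_insert by (intro Suc.hyps) auto
    moreover have "filter_mset (\<lambda>x. \<forall>j\<in>insert a S. x ! j = (v(a := b)) j) A
                 = filter_mset (\<lambda>x. ?P x \<and> x ! a = b) A"
      using a by (intro filter_mset_cong) auto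
    ultimately show ?thesis using card_insert by simp
  qed
  have "size (filter_mset ?P A)
        = size (filter_mset (\<lambda>x. ?P x \<and> x ! a) A) + size (filter_mset (\<lambda>x. ?P x \<and> \<not> x ! a) A)"
    using multiset_partition[of "filter_mset ?P A" "\<lambda>x. x ! a"] by (metis filter_filter_mset size_union)
  then show ?case using extend[of True] extend[of False] by (simp add: algebra_simps)
qed

lemma binary_OA_walsh_term:
  assumes "binary_OA n M \<tau> A" and "\<tau> \<le> n" and "R \<subseteq> {0..<n}" and "card R \<le> \<tau>"
  shows "(-2) ^ card R * int (ones_count A R) = int M * (-1) ^ card R"
proof -
  have "ones_count A R * 2 ^ card R = M"
    using binary_OA_lower_strength[OF assms, of "\<lambda>_. True"] by (simp add: ones_count_def)
  then have "int (ones_count A R) * 2 ^ card R = int M"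
    by (metis of_nat_mult of_nat_numeral of_nat_power)
  moreover have "(-2::int) ^ card R = (-1) ^ card R * 2 ^ card R"
    by (simp flip: power_mult_distrib)
  ultimately show ?thesis by (simp add: algebra_simps)
qed

lemma binary_OA_walsh_coeff_low:
  assumes "binary_OA n M \<tau> A" and "\<tau> \<le> n" and "T \<subseteq> {0..<n}" and "card T \<le> \<tau>"
  shows "walsh_coeff A T = (if T = {} then int M else 0)"
proof -
  have "finite T" using assms(3) finite_subset by blast
  have "walsh_coeff A T = (\<Sum>R\<in>Pow T. int M * (-1) ^ card R)"
    unfolding walsh_coeff_eq_sum_ones_count[OF \<open>finite T\<close>]
  proof (intro sum.cong refl binary_OA_walsh_term[OF assms(1,2)])
    fix R assume "R \<in> Pow T"
    then show "R \<subseteq> {0..<n}" "card R \<le> \<tau>"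
      using assms(3,4) card_mono[OF \<open>finite T\<close>, of R] by auto
  qed
  also have "\<dots> = int M * (\<Sum>k\<le>card T. (-1) ^ k * of_nat (card T choose k))"
    using sum_Pow_comp_card[OF \<open>finite T\<close>, of "\<lambda>k. int M * (-1) ^ k"]
    by (simp add: sum_distrib_left algebra_simps)
  also have "\<dots> = (if T = {} then int M else 0)"
    using \<open>finite T\<close> by (auto simp: choose_alternating_sum card_gt_0_iff)
  finally show ?thesis .
qed

lemma binary_OA_walsh_coeff_mod:
  assumes "binary_OA n M \<tau> A" and "\<tau> \<le> n" and "T \<subseteq> {0..<n}"
  shows "2 ^ Suc \<tau> dvd walsh_coeff A T - int M * (\<Sum>k\<le>\<tau>. (-1) ^ k * of_nat (card T choose k))"
proof -
  define d where "d k = (if k \<le> \<tau> then int M * (-1) ^ k else 0)" for k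
  have "finite T" using assms(3) finite_subset by blast
  have "2 ^ Suc \<tau> dvd walsh_coeff A T - (\<Sum>R\<in>Pow T. d (card R))"
    unfolding walsh_coeff_eq_sum_ones_count[OF \<open>finite T\<close>] sum_subtractf[symmetric]
  proof (rule dvd_sum)
    fix R assume "R \<in> Pow T"
    show "2 ^ Suc \<tau> dvd (-2) ^ card R * int (ones_count A R) - d (card R)"
    proof (cases "card R \<le> \<tau>")
      case True
      then show ?thesis
        using \<open>R \<in> Pow T\<close> assms binary_OA_walsh_term[OF assms(1,2)] by (auto simp: d_def)
    next
      case False
      then have "(2::int) ^ Suc \<tau> dvd 2 ^ card R" by (intro le_imp_power_dvd) simp
      also have "(2::int) ^ card R dvd (-2) ^ card R"
        by (simp add: power_minus')
      finally show ?thesis using False by (simp add: d_def)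
    qed
  qed
  moreover have "(\<Sum>R\<in>Pow T. d (card R)) = (\<Sum>k\<le>card T + \<tau>. of_nat (card T choose k) * d k)"
    unfolding sum_Pow_comp_card[OF \<open>finite T\<close>] by (rule sum.mono_neutral_left) auto
  moreover have "\<dots> = int M * (\<Sum>k\<le>\<tau>. (-1) ^ k * of_nat (card T choose k))"
    unfolding sum_distrib_left by (rule sum.mono_neutral_cong_right) (auto simp: d_def)
  ultimately show ?thesis by simp
qed

lemma binary_OA_112_4_walsh_coeff_sq:
  assumes "binary_OA n 112 4 A" and "4 \<le> n" and "T \<subseteq> {0..<n}"
    and "5 \<le> card T" and "card T \<le> 7"
  shows "256 \<le> walsh_coeff A T ^ 2"
proof -
  define s :: int where "s = (\<Sum>k\<le>4. (-1) ^ k * of_nat (card T choose k))"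
  have "card T = 5 \<or> card T = 6 \<or> card T = 7" using assms(4,5) by auto
  then have "s \<in> {1, 5, 15}" unfolding s_def by (auto simp: numeral_eq_Suc atMost_Suc)
  then have "odd s" by auto
  obtain q where q: "walsh_coeff A T - 112 * s = 32 * q"
    using binary_OA_walsh_coeff_mod[OF assms(1-3)] unfolding s_def by auto
  define m where "m = 7 * s + 2 * q"
  then have w: "walsh_coeff A T = 16 * m" using q by simp
  have "odd m" using \<open>odd s\<close> by (simp add: m_def)
  then have "1 \<le> \<bar>m\<bar>" by (cases "m = 0") auto
  then have "1 \<le> m ^ 2" by (metis one_le_power power2_abs)
  then show ?thesis unfolding w by (simp add: power_mult_distrib)
qed

lemma no_binary_OA_112_4:
  assumes "9 \<le> n"
  shows "\<not> binary_OA n 112 4 A"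
proof
  assume oa: "binary_OA n 112 4 A"
  have "4 \<le> n" using assms by simp
  define bound :: "nat \<Rightarrow> int" where
    "bound k = (if k = 0 then 9 * 112 ^ 2 else if 5 \<le> k \<and> k \<le> 7 then (9 - 2 * int k) * 256 else 0)"
    for k
  have term_bound: "(9 - 2 * int (card T)) * walsh_coeff A T ^ 2 \<le> bound (card T)"
    if "T \<subseteq> {0..<9}" for T
  proof -
    have T: "T \<subseteq> {0..<n}" using that assms by auto
    have "finite T" using that finite_subset by blast
    consider "T = {}" | "T \<noteq> {}" "card T \<le> 4" | "5 \<le> card T" "card T \<le> 7" | "8 \<le> card T"
      by linarith
    then show ?thesis
    proof cases
      case 1
      then show ?thesis using binary_OA_walsh_coeff_low[OF oa \<open>4 \<le> n\<close> T] by (simp add: bound_def)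
    next
      case 2
      then show ?thesis
        using binary_OA_walsh_coeff_low[OF oa \<open>4 \<le> n\<close> T] \<open>finite T\<close> by (simp add: bound_def)
    next
      case 3
      then have "(9 - 2 * int (card T)) * walsh_coeff A T ^ 2 \<le> (9 - 2 * int (card T)) * 256"
        using binary_OA_112_4_walsh_coeff_sq[OF oa \<open>4 \<le> n\<close> T] by (intro mult_left_mono_neg) auto
      then show ?thesis using 3 by (simp add: bound_def)
    next
      case 4
      then show ?thesis by (simp add: bound_def mult_nonpos_nonneg)
    qed
  qed
  have "0 \<le> (\<Sum>T\<in>Pow {0..<9::nat}. (int (card {0..<9::nat}) - 2 * int (card T)) * walsh_coeff A T ^ 2)"
    by (rule walsh_weighted_sq_sum_nonneg) simp
  also have "\<dots> \<le> (\<Sum>T\<in>Pow {0..<9::nat}. bound (card T))"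
    using term_bound by (intro sum_mono) simp
  also have "\<dots> = (\<Sum>k\<le>9. of_nat (9 choose k) * bound k)"
    by (simp add: sum_Pow_comp_card)
  also have "\<dots> < 0" \<comment> \<open>it equals 9 * 112^2 - 256 * (126 + 3 * 84 + 5 * 36) = -29952\<close>
    by (simp add: bound_def numeral_eq_Suc atMost_Suc)
  finally show False by simp
qed

theorem theorem4p3:
  shows "\<not> (\<exists>A. binary_OA 10 112 4 A) \<and> \<not> (\<exists>A. binary_OA 11 112 4 A)"
  using no_binary_OA_112_4[of 10] no_binary_OA_112_4[of 11] by auto

end
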